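(* Let $d\ge1$, $K\ge2$, $n\ge1$ be integers and let $(\mathbf W^\star,\mathbf H^\star)$ be an optimal solution of $$\min_{\mathbf W\in\mathrm{OB}(d,K),\ \mathbf H\in\mathrm{OB}(d,nK)}\ \mathcal L_{\mathrm{HardMax}}(\mathbf W,\mathbf H).$$ Then $\mathbf W^\star$ is a Softmax Code, i.e. $\mathbf W^\star\in\operatorname{argmax}_{\mathbf W\in\mathrm{OB}(d,K)}\rho_{\text{one-vs-rest}}(\mathbf W)$.
   Context: $\mathrm{OB}(d,m)$ is the set of real $d\times m$ matrices with unit-norm columns. $\mathbf W\in\mathrm{OB}(d,K)$ has columns $\mathbf w_1,\dots,\mathbf w_K$; $\mathbf H\in\mathrm{OB}(d,nK)$ has columns $\mathbf h_{k,i}$, $k\in[K],i\in[n]$. $\mathcal L_{\mathrm{HardMax}}(\mathbf W,\mathbf H)=\max_{k\in[K]}\max_{i\in[n]}\max_{k'\ne k}\langle \mathbf w_{k'}-\mathbf w_k,\mathbf h_{k,i}\rangle$. For a point $\mathbf v$ and a finite set $\mathcal W$, $\operatorname{dist}(\mathbf v,\mathcal W)=\inf\{\|\mathbf v-\mathbf w\|_2:\mathbf w\in\operatorname{conv}(\mathcal W)\}$. $\rho_{\text{one-vs-rest}}(\mathbf W)=\min_{k\in[K]}\operatorname{dist}(\mathbf w_k,\{\mathbf w_j\}_{j\in[K]\setminus\{k\}})$. A Softmax Code is any maximizer of $\rho_{\text{one-vs-rest}}$ over $\mathrm{OB}(d,K)$. *)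

theory Defs
  imports "HOL-Analysis.Analysis"
begin

text \<open>Vectors in R^d are elements of real^'d (d = CARD('d) >= 1).
  W in OB(d,K): family W k, k < K (0-based), of unit vectors.
  H in OB(d,nK): family H k i, k < K, i < n, of unit vectors.\<close>

definition OB_W :: "nat \<Rightarrow> (nat \<Rightarrow> real^'d) \<Rightarrow> bool" where
  "OB_W K W \<longleftrightarrow> (\<forall>k<K. norm (W k) = 1)"

definition OB_H :: "nat \<Rightarrow> nat \<Rightarrow> (nat \<Rightarrow> nat \<Rightarrow> real^'d) \<Rightarrow> bool" where
  "OB_H K n H \<longleftrightarrow> (\<forall>k<K. \<forall>i<n. norm (H k i) = 1)"

definition L_HardMax :: "nat \<Rightarrow> nat \<Rightarrow> (nat \<Rightarrow> real^'d) \<Rightarrow> (nat \<Rightarrow> nat \<Rightarrow> real^'d) \<Rightarrow> real" where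
  "L_HardMax K n W H =
     Max {inner (W k' - W k) (H k i) | k i k'. k < K \<and> i < n \<and> k' < K \<and> k' \<noteq> k}"

definition dist_conv :: "real^'d \<Rightarrow> (real^'d) set \<Rightarrow> real" where
  "dist_conv v S = (INF w \<in> convex hull S. norm (v - w))"

definition rho_ovr :: "nat \<Rightarrow> (nat \<Rightarrow> real^'d) \<Rightarrow> real" where
  "rho_ovr K W = Min {dist_conv (W k) (W ` ({..<K} - {k})) | k. k < K}"

end

theory Submission
  imports Defs
begin

text \<open>For fixed \<open>W\<close>, the least hard-max loss over all \<open>H\<close> is \<open>- rho_ovr K W\<close>. If \<open>h\<close> is a
  unit feature of class \<open>k\<close>, the largest margin \<open>\<langle>w_j - w_k, h\<rangle>\<close> (\<open>j \<noteq> k\<close>) bounds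
  \<open>\<langle>v - w_k, h\<rangle>\<close> on the whole convex hull of the other classifiers, so it is at least
  \<open>- dist(w_k, conv {w_j | j \<noteq> k})\<close>; the unit normal pointing from the closest point of that hull
  to \<open>w_k\<close> attains the bound.\<close>

lemma neg_le_dist_conv_if_halfspace:
  fixes w h :: "real^'d" and S :: "(real^'d) set"
  assumes "S \<noteq> {}" "norm h \<le> 1" "\<And>s. s \<in> S \<Longrightarrow> inner (s - w) h \<le> c"
  shows "- c \<le> dist_conv w S"
  unfolding dist_conv_def
proof (rule cINF_greatest)
  show "convex hull S \<noteq> {}" using assms(1) by simp
  fix v assume "v \<in> convex hull S"
  moreover have "convex hull S \<subseteq> {x. inner h x \<le> c + inner h w}"
  proof (rule hull_minimal)
    show "S \<subseteq> {x. inner h x \<le> c + inner h w}"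
    proof
      fix x assume "x \<in> S"
      then show "x \<in> {x. inner h x \<le> c + inner h w}"
        using assms(3)[OF \<open>x \<in> S\<close>] by (simp add: inner_diff_right inner_commute)
    qed
  qed (rule convex_halfspace_le)
  ultimately have "inner h v \<le> c + inner h w" by blast
  then have "inner (v - w) h \<le> c" by (simp add: inner_diff_right inner_commute)
  moreover have "- norm (v - w) \<le> inner (v - w) h"
    using Cauchy_Schwarz_ineq2[of "v - w" h] assms(2) mult_left_le[of "norm h" "norm (v - w)"]
    by auto
  ultimately show "- c \<le> norm (w - v)" by (simp add: norm_minus_commute)
qed

lemma inner_le_neg_dist_closest_point:
  fixes a x :: "'a::euclidean_space"
  assumes "convex C" "closed C" "x \<in> C"
  shows "inner (x - a) (a - closest_point C a) \<le> - (norm (a - closest_point C a))\<^sup>2"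
proof -
  let ?p = "closest_point C a"
  have "inner (x - a) (a - ?p) = inner (a - ?p) (x - ?p) - inner (a - ?p) (a - ?p)"
    by (simp add: inner_diff_left inner_diff_right inner_commute)
  then show ?thesis
    using closest_point_dot[OF assms] by (simp add: power2_norm_eq_inner)
qed

lemma exists_unit_normal_dist_conv:
  fixes w :: "real^'d" and S :: "(real^'d) set"
  assumes "finite S" "S \<noteq> {}" "norm w = 1" "\<And>s. s \<in> S \<Longrightarrow> norm s = 1"
  shows "\<exists>h. norm h = 1 \<and> (\<forall>s\<in>S. inner (s - w) h \<le> - dist_conv w S)"
proof -
  let ?C = "convex hull S"
  let ?p = "closest_point ?C w"
  define \<delta> where "\<delta> = norm (w - ?p)"
  have closed: "closed ?C"
    by (intro compact_imp_closed compact_convex_hull finite_imp_compact assms(1))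
  have "?p \<in> ?C" using closest_point_in_set[OF closed] assms(2) by simp
  then have dist_conv_le: "dist_conv w S \<le> \<delta>"
    unfolding dist_conv_def \<delta>_def by (rule cINF_lower[rotated]) (auto intro: bdd_belowI[of _ 0])
  have "\<exists>h. norm h = 1 \<and> (\<forall>s\<in>S. inner (s - w) h \<le> - \<delta>)"
  proof (cases "\<delta> = 0")
    case True
    \<comment> \<open>then \<open>w\<close> lies in the hull, and \<open>h = w\<close> works because \<open>S\<close> consists of unit vectors\<close>
    have "inner (s - w) w \<le> 0" if "s \<in> S" for s
      using Cauchy_Schwarz_ineq2[of s w] assms(3) assms(4)[OF that]
      by (simp add: inner_diff_left power2_norm_eq_inner[symmetric])
    then show ?thesis using True assms(3) by auto
  next
    case False
    then have "\<delta> > 0" unfolding \<delta>_def by simp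
    have "inner (s - w) ((w - ?p) /\<^sub>R \<delta>) \<le> - \<delta>" if "s \<in> S" for s
    proof -
      have "inner (s - w) (w - ?p) \<le> - \<delta>\<^sup>2"
        using inner_le_neg_dist_closest_point[OF convex_convex_hull closed hull_inc[OF that]]
        unfolding \<delta>_def .
      then have "inverse \<delta> * inner (s - w) (w - ?p) \<le> inverse \<delta> * - \<delta>\<^sup>2"
        using \<open>\<delta> > 0\<close> by (intro mult_left_mono) auto
      with \<open>\<delta> > 0\<close> show ?thesis by (simp add: power2_eq_square mult.assoc[symmetric])
    qed
    moreover have "norm ((w - ?p) /\<^sub>R \<delta>) = 1" using \<open>\<delta> > 0\<close> unfolding \<delta>_def by simp
    ultimately show ?thesis by blast
  qed
  with dist_conv_le show ?thesis by force
qed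

lemma finite_L_HardMax_set:
  fixes W :: "nat \<Rightarrow> real^'d" and H :: "nat \<Rightarrow> nat \<Rightarrow> real^'d"
  shows "finite {inner (W k' - W k) (H k i) | k i k'. k < K \<and> i < n \<and> k' < K \<and> k' \<noteq> k}"
proof (rule finite_subset)
  show "{inner (W k' - W k) (H k i) | k i k'. k < K \<and> i < n \<and> k' < K \<and> k' \<noteq> k}
     \<subseteq> (\<lambda>(k,i,k'). inner (W k' - W k) (H k i)) ` ({..<K} \<times> {..<n} \<times> {..<K})"
    by force
qed auto

lemma L_HardMax_ge:
  assumes "k < K" "i < n" "k' < K" "k' \<noteq> k"
  shows "inner (W k' - W k) (H k i) \<le> L_HardMax K n W H"
  unfolding L_HardMax_def by (rule Max_ge[OF finite_L_HardMax_set]) (use assms in blast)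

lemma L_HardMax_le:
  assumes "K \<ge> 2" "n \<ge> 1"
    and "\<And>k i k'. k < K \<Longrightarrow> i < n \<Longrightarrow> k' < K \<Longrightarrow> k' \<noteq> k \<Longrightarrow> inner (W k' - W k) (H k i) \<le> c"
  shows "L_HardMax K n W H \<le> c"
  unfolding L_HardMax_def
proof (rule Max.boundedI[OF finite_L_HardMax_set])
  have "inner (W 1 - W 0) (H 0 0)
          \<in> {inner (W k' - W k) (H k i) | k i k'. k < K \<and> i < n \<and> k' < K \<and> k' \<noteq> k}"
    using assms(1,2) by (intro CollectI exI[of _ 0] exI[of _ "0::nat"] exI[of _ 1]) auto
  then show "{inner (W k' - W k) (H k i) | k i k'. k < K \<and> i < n \<and> k' < K \<and> k' \<noteq> k} \<noteq> {}"
    by blast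
qed (use assms(3) in blast)

lemma rho_ovr_le:
  assumes "k < K"
  shows "rho_ovr K W \<le> dist_conv (W k) (W ` ({..<K} - {k}))"
  unfolding rho_ovr_def by (rule Min_le) (use assms in auto)

lemma rho_ovr_attained:
  assumes "K > 0"
  obtains k where "k < K" "rho_ovr K W = dist_conv (W k) (W ` ({..<K} - {k}))"
proof -
  have "rho_ovr K W \<in> {dist_conv (W k) (W ` ({..<K} - {k})) | k. k < K}"
    unfolding rho_ovr_def by (rule Min_in) (use assms in force)+
  with that show ?thesis by blast
qed

lemma lessThan_minus_singleton_nonempty:
  fixes K k :: nat
  assumes "K \<ge> 2"
  shows "{..<K} - {k} \<noteq> {}"
proof -
  have "0 \<in> {..<K}" "1 \<in> {..<K}" using assms by auto
  then show ?thesis by (metis Diff_iff empty_iff singletonD zero_neq_one)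
qed

lemma neg_L_HardMax_le_rho_ovr:
  assumes "K \<ge> 2" "n \<ge> 1" "OB_H K n H"
  shows "- L_HardMax K n W H \<le> rho_ovr K W"
proof -
  obtain k where k: "k < K" "rho_ovr K W = dist_conv (W k) (W ` ({..<K} - {k}))"
    by (rule rho_ovr_attained[of K]) (use assms(1) in simp)
  have "- L_HardMax K n W H \<le> dist_conv (W k) (W ` ({..<K} - {k}))"
  proof (rule neg_le_dist_conv_if_halfspace)
    show "W ` ({..<K} - {k}) \<noteq> {}" using lessThan_minus_singleton_nonempty[OF assms(1)] by simp
    show "norm (H k 0) \<le> 1" using assms(2,3) k(1) unfolding OB_H_def by auto
    show "inner (s - W k) (H k 0) \<le> L_HardMax K n W H" if "s \<in> W ` ({..<K} - {k})" for s
      using that L_HardMax_ge[OF k(1), of 0 n] assms(2) by auto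
  qed
  with k(2) show ?thesis by simp
qed

lemma exists_OB_H_L_HardMax_le_neg_rho_ovr:
  assumes "K \<ge> 2" "n \<ge> 1" "OB_W K W"
  obtains H where "OB_H K n H" "L_HardMax K n W H \<le> - rho_ovr K W"
proof -
  have "\<exists>h. norm h = 1 \<and> (\<forall>s\<in>W ` ({..<K} - {k}). inner (s - W k) h \<le> - dist_conv (W k) (W ` ({..<K} - {k})))"
    if "k < K" for k
    using exists_unit_normal_dist_conv[of "W ` ({..<K} - {k})" "W k"]
      lessThan_minus_singleton_nonempty[OF assms(1), of k] assms(3) that
    unfolding OB_W_def by auto
  then obtain h where h: "\<And>k. k < K \<Longrightarrow> norm (h k) = 1"
    "\<And>k. k < K \<Longrightarrow> \<forall>s\<in>W ` ({..<K} - {k}). inner (s - W k) (h k) \<le> - dist_conv (W k) (W ` ({..<K} - {k}))"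
    by metis
  show ?thesis
  proof
    show "OB_H K n (\<lambda>k i. h k)" unfolding OB_H_def using h(1) by simp
    show "L_HardMax K n W (\<lambda>k i. h k) \<le> - rho_ovr K W"
    proof (rule L_HardMax_le[OF assms(1,2)])
      fix k i k' assume "k < K" "i < n" "k' < K" "k' \<noteq> k"
      then show "inner (W k' - W k) (h k) \<le> - rho_ovr K W"
        using h(2)[of k] rho_ovr_le[of k K W] by force
    qed
  qed
qed

theorem mainTheorem2:
  fixes K n :: nat
    and Wopt :: "nat \<Rightarrow> real^'d"
    and Hopt :: "nat \<Rightarrow> nat \<Rightarrow> real^'d"
  assumes "K \<ge> 2" and "n \<ge> 1"
    and "OB_W K Wopt" and "OB_H K n Hopt"
    and "\<forall>(W::nat \<Rightarrow> real^'d) (H::nat \<Rightarrow> nat \<Rightarrow> real^'d). OB_W K W \<and> OB_H K n H \<longrightarrow> L_HardMax K n Wopt Hopt \<le> L_HardMax K n W H"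
  shows "OB_W K Wopt \<and> (\<forall>W::nat \<Rightarrow> real^'d. OB_W K W \<longrightarrow> rho_ovr K W \<le> rho_ovr K Wopt)"
proof (intro conjI allI impI)
  show "OB_W K Wopt" by fact
  fix W :: "nat \<Rightarrow> real^'d"
  assume "OB_W K W"
  then obtain H where "OB_H K n H" and "L_HardMax K n W H \<le> - rho_ovr K W"
    using exists_OB_H_L_HardMax_le_neg_rho_ovr assms(1,2) by blast
  moreover have "L_HardMax K n Wopt Hopt \<le> L_HardMax K n W H"
    using assms(5) \<open>OB_W K W\<close> \<open>OB_H K n H\<close> by blast
  moreover have "- L_HardMax K n Wopt Hopt \<le> rho_ovr K Wopt"
    using neg_L_HardMax_le_rho_ovr assms(1,2,4) .
  ultimately show "rho_ovr K W \<le> rho_ovr K Wopt" by linarith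
qed

end
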